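(* Let $n\ge 1$, let $\mathcal{A},\mathcal{I}\subseteq\{1,\dots,n\}$, and let $H:\mathbb{R}^n_+\to[0,1]$ be given by $$H(\mathbf{y})=\frac{A(\mathbf{y})}{A(\mathbf{y})+B(\mathbf{y})},\qquad A(\mathbf{y})=\Big(\sum_{i\in\mathcal{A}} w_i y_i^{n_i}\Big)^m,\qquad B(\mathbf{y})=K^m\Big(1+\sum_{j\in\mathcal{I}}\Big(\frac{y_j}{K_j}\Big)^{n_j}\Big)^m,$$ where $w_i>0$, $K>0$, $K_j>0$ are constants. Assume that all Hill coefficients satisfy $n_i\ge 1$ and that $m\ge 1$. Then the first derivatives of $H$ are uniformly bounded on $\mathbb{R}^n_+$: there exists $C>0$ such that $$\Big|\frac{\partial H}{\partial y_k}(\mathbf{y})\Big|\le C\qquad\text{for all }k\in\{1,\dots,n\}\text{ and all }\mathbf{y}\in\mathbb{R}^n_+.$$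
   Context: $\mathbb{R}^n_+=[0,\infty)^n$. $\mathcal{A}$ is the set of activator indices and $\mathcal{I}$ the set of inhibitor indices; $n_i$ ($i\in\mathcal{A}\cup\mathcal{I}$) are the Hill coefficients, $m$ is an overall cooperativity coefficient, $w_i$ are weights, $K$ is the half-maximal activation constant and $K_j$ are inhibition constants. Derivatives at boundary points of $\mathbb{R}^n_+$ are understood as one-sided derivatives. *)

theory Defs
  imports "HOL-Analysis.Analysis"
begin

text \<open>Points of R^n_+ are represented as functions y :: nat => real, only the
coordinates 1..n matter; y is in R^n_+ iff y i >= 0 for all i in {1..n}.
Hill coefficients hc i and the cooperativity m are reals >= 1; powers with real
exponent are powr (note 0 powr a = 0, which is the correct value for a >= 1).\<close>

definition nonneg_orthant :: "nat \<Rightarrow> (nat \<Rightarrow> real) set" where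
  "nonneg_orthant n = {y. \<forall>i\<in>{1..n}. 0 \<le> y i}"

definition hill_A :: "nat set \<Rightarrow> (nat \<Rightarrow> real) \<Rightarrow> (nat \<Rightarrow> real) \<Rightarrow> real \<Rightarrow> (nat \<Rightarrow> real) \<Rightarrow> real" where
  "hill_A Act w hc m y = (\<Sum>i\<in>Act. w i * y i powr hc i) powr m"

definition hill_B :: "nat set \<Rightarrow> real \<Rightarrow> (nat \<Rightarrow> real) \<Rightarrow> (nat \<Rightarrow> real) \<Rightarrow> real \<Rightarrow> (nat \<Rightarrow> real) \<Rightarrow> real" where
  "hill_B Inh K Kj hc m y = K powr m * (1 + (\<Sum>j\<in>Inh. (y j / Kj j) powr hc j)) powr m"

definition hill_H :: "nat set \<Rightarrow> nat set \<Rightarrow> (nat \<Rightarrow> real) \<Rightarrow> real \<Rightarrow> (nat \<Rightarrow> real) \<Rightarrow> (nat \<Rightarrow> real) \<Rightarrow> real \<Rightarrow> (nat \<Rightarrow> real) \<Rightarrow> real" where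
  "hill_H Act Inh w K Kj hc m y =
     hill_A Act w hc m y / (hill_A Act w hc m y + hill_B Inh K Kj hc m y)"

definition has_partial_deriv :: "((nat \<Rightarrow> real) \<Rightarrow> real) \<Rightarrow> nat \<Rightarrow> real \<Rightarrow> (nat \<Rightarrow> real) \<Rightarrow> bool" where
  "has_partial_deriv f k D y \<longleftrightarrow>
     ((\<lambda>t. f (y(k := t))) has_real_derivative D) (at (y k) within {0..})"

end

theory Submission
  imports Defs
begin

text \<open>Write \<open>H = A / (A + B)\<close> with \<open>B \<ge> K\<^sup>m > 0\<close>. Since \<open>A\<close> and \<open>B\<close> are nondecreasing in
every coordinate, the quotient rule gives \<open>|\<partial>H| \<le> \<partial>A / (A + B) + \<partial>B / B\<close>. For \<open>p \<ge> 1\<close> the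
derivative of \<open>x\<^sup>p\<close> is at most \<open>p (1 + x\<^sup>p)\<close>, so each inner sum \<open>S\<close> grows at most linearly
in itself, \<open>\<partial>\<^sub>k S \<le> (n\<^sub>k / d) (c + S)\<close>, and passing through the outer power \<open>m\<close> gives
\<open>\<partial>B \<le> (m n\<^sub>k / K\<^sub>k) B\<close> and \<open>\<partial>A \<le> const (1 + A) \<le> const (A + B)\<close>.\<close>

text \<open>The derivative \<open>p x\<^bsup>p-1\<^esup>\<close> of \<open>x powr p\<close>, corrected at \<open>p = 1\<close> where
\<open>0 powr 0 = 0\<close> would give the wrong value at \<open>x = 0\<close>.\<close>

definition powr_deriv :: "real \<Rightarrow> real \<Rightarrow> real" where
  "powr_deriv p x = (if p = 1 then 1 else p * x powr (p - 1))"

lemma powr_deriv_nonneg: "p \<ge> 1 \<Longrightarrow> x \<ge> 0 \<Longrightarrow> powr_deriv p x \<ge> 0"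
  by (simp add: powr_deriv_def)

lemma powr_deriv_mult_self: "p \<ge> 1 \<Longrightarrow> x \<ge> 0 \<Longrightarrow> powr_deriv p x * x = p * x powr p"
  by (auto simp: powr_deriv_def powr_diff)

lemma powr_deriv_le:
  assumes "p \<ge> 1" "x \<ge> 0"
  shows "powr_deriv p x \<le> p * (1 + x powr p)"
proof (cases "p = 1")
  case True
  then show ?thesis using assms by (simp add: powr_deriv_def)
next
  case False
  have "x powr (p - 1) \<le> 1 + x powr p"
  proof (cases "x \<le> 1")
    case True
    then have "x powr (p - 1) \<le> 1" using assms by (simp add: powr_le1)
    then show ?thesis using powr_ge_zero[of x p] by linarith
  next
    case False
    then have "x powr (p - 1) \<le> x powr p" by (intro powr_mono) auto
    then show ?thesis by simp
  qed
  then show ?thesis using False assms by (simp add: powr_deriv_def)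
qed

lemma has_real_derivative_powr_nonneg:
  assumes p: "p \<ge> 1" and x: "x \<ge> 0"
  shows "((\<lambda>x. x powr p) has_real_derivative powr_deriv p x) (at x within {0..})"
proof (cases "x = 0")
  case False
  with x have "x > 0" by simp
  have "((\<lambda>x. x powr p) has_real_derivative p * x powr (p - 1)) (at x within {0..})"
    using has_real_derivative_powr[OF \<open>x > 0\<close>] by (rule has_field_derivative_at_within)
  moreover have "p * x powr (p - 1) = powr_deriv p x" using \<open>x > 0\<close> by (simp add: powr_deriv_def)
  ultimately show ?thesis by simp
next
  case x0: True
  show ?thesis
  proof (cases "p = 1")
    case True
    have "((\<lambda>x. x) has_real_derivative 1) (at 0 within {0..})" by (rule DERIV_ident)
    then have "((\<lambda>x. x powr p) has_real_derivative 1) (at 0 within {0..})"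
      by (rule has_field_derivative_transform_within[where d=1]) (auto simp: True)
    then show ?thesis using x0 True by (simp add: powr_deriv_def)
  next
    case False
    with p have p1: "p > 1" by simp
    have "((\<lambda>y. y powr (p - 1)) \<longlongrightarrow> 0) (at 0 within {0..})"
      by (rule tendsto_zero_powrI) (auto intro!: tendsto_ident_at simp: p1 eventually_at_filter)
    moreover have "\<forall>\<^sub>F y in at 0 within {0..}. y powr (p - 1) = (y powr p - 0 powr p) / (y - 0)"
      unfolding eventually_at_filter by (auto simp: powr_diff)
    ultimately have "((\<lambda>y. (y powr p - 0 powr p) / (y - 0)) \<longlongrightarrow> 0) (at 0 within {0..})"
      by (rule Lim_transform_eventually)
    then show ?thesis using x0 p1 by (simp add: has_field_derivative_iff powr_deriv_def)
  qed
qed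

lemma DERIV_powr_nonneg_chain:
  assumes p: "p \<ge> 1" and f: "(f has_real_derivative f') (at t within S)"
    and nonneg: "\<And>s. s \<in> S \<Longrightarrow> f s \<ge> 0" "f t \<ge> 0"
  shows "((\<lambda>s. f s powr p) has_real_derivative powr_deriv p (f t) * f') (at t within S)"
proof -
  have "((\<lambda>x. x powr p) has_real_derivative powr_deriv p (f t)) (at (f t) within f ` S)"
    using has_real_derivative_powr_nonneg[OF p nonneg(2)]
    by (rule has_field_derivative_subset) (auto intro: nonneg(1))
  from DERIV_image_chain[OF this f] show ?thesis by (simp add: o_def)
qed

lemma powr_deriv_chain_le:
  assumes m: "m \<ge> 1" and x: "x \<ge> 0" and c: "c \<ge> 0"
    and f': "f' \<le> L * (c + x)" and L: "L \<ge> 0"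
  shows "powr_deriv m x * f' \<le> L * m * (c + (c + 1) * x powr m)"
proof -
  have "powr_deriv m x * f' \<le> powr_deriv m x * (L * (c + x))"
    using f' powr_deriv_nonneg[OF m x] by (rule mult_left_mono)
  also have "\<dots> = L * (c * powr_deriv m x + m * x powr m)"
    using powr_deriv_mult_self[OF m x] by (simp add: algebra_simps)
  also have "\<dots> \<le> L * (c * (m * (1 + x powr m)) + m * x powr m)"
    using powr_deriv_le[OF m x] c L by (simp add: mult_left_mono)
  also have "\<dots> = L * m * (c + (c + 1) * x powr m)"
    by (simp add: algebra_simps)
  finally show ?thesis .
qed

lemma linear_growth_div_add_le:
  fixes A A' B L c \<beta> :: real
  assumes A': "A' \<le> L * (c + (c + 1) * A)" and "A \<ge> 0" "c \<ge> 0" "L \<ge> 0" "\<beta> > 0" "\<beta> \<le> B"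
  shows "A' / (A + B) \<le> L * (c / \<beta> + c + 1)"
proof -
  have "\<beta> \<le> A + B" using assms by linarith
  from mult_left_mono[OF this \<open>c \<ge> 0\<close>] have "c \<le> c / \<beta> * (A + B)"
    using \<open>\<beta> > 0\<close> by (simp add: field_simps)
  moreover have "(c + 1) * A \<le> (c + 1) * (A + B)" using assms by simp
  moreover have "(c / \<beta> + c + 1) * (A + B) = c / \<beta> * (A + B) + (c + 1) * (A + B)"
    by (simp add: algebra_simps)
  ultimately have "c + (c + 1) * A \<le> (c / \<beta> + c + 1) * (A + B)" by linarith
  from mult_left_mono[OF this \<open>L \<ge> 0\<close>] A' have "A' \<le> L * (c / \<beta> + c + 1) * (A + B)"
    by (simp add: mult.assoc)
  then show ?thesis using assms by (simp add: pos_divide_le_eq)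
qed

lemma DERIV_ratio_abs_le:
  fixes A B :: "real \<Rightarrow> real"
  assumes dA: "(A has_real_derivative A') (at t within S)"
    and dB: "(B has_real_derivative B') (at t within S)"
    and A: "A t \<ge> 0" and B: "B t > 0" and "A' \<ge> 0" "B' \<ge> 0"
  shows "\<exists>D. ((\<lambda>s. A s / (A s + B s)) has_real_derivative D) (at t within S) \<and>
             \<bar>D\<bar> \<le> A' / (A t + B t) + B' / B t"
proof -
  define a b where "a = A t" and "b = B t"
  have "a + b > 0" "b > 0" "a \<ge> 0" using A B by (simp_all add: a_def b_def)
  define D where "D = (A' * (a + b) - a * (A' + B')) / ((a + b) * (a + b))"
  have "((\<lambda>s. A s / (A s + B s)) has_real_derivative D) (at t within S)"
    using DERIV_divide[OF dA DERIV_add[OF dA dB]] \<open>a + b > 0\<close>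
    by (simp add: D_def a_def b_def)
  moreover have "\<bar>D\<bar> \<le> (A' * b + a * B') / ((a + b) * (a + b))"
    using \<open>a + b > 0\<close> \<open>a \<ge> 0\<close> \<open>b > 0\<close> \<open>A' \<ge> 0\<close> \<open>B' \<ge> 0\<close>
    by (auto simp: D_def abs_le_iff divide_right_mono algebra_simps)
  moreover have "A' * b / ((a + b) * (a + b)) \<le> A' / (a + b)"
    using \<open>a + b > 0\<close> \<open>a \<ge> 0\<close> \<open>A' \<ge> 0\<close> by (simp add: divide_simps mult_left_mono)
  moreover have "a * B' / ((a + b) * (a + b)) \<le> B' / b"
  proof -
    have "a * b \<le> (a + b) * (a + b)" using \<open>a \<ge> 0\<close> \<open>b > 0\<close> by (simp add: algebra_simps)
    then have "a * B' * b \<le> B' * ((a + b) * (a + b))"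
      using \<open>B' \<ge> 0\<close> by (metis mult.assoc mult.commute mult_left_mono)
    then show ?thesis using \<open>a + b > 0\<close> \<open>b > 0\<close> by (simp add: divide_simps)
  qed
  ultimately show ?thesis
    by (intro exI[of _ D]) (auto simp: a_def b_def add_divide_distrib)
qed

text \<open>Both inner sums of the Hill function are of this form: the activator sum with
\<open>d = 1\<close>, the inhibitor sum with \<open>c = 1\<close>.\<close>

definition weighted_power_sum ::
    "nat set \<Rightarrow> (nat \<Rightarrow> real) \<Rightarrow> (nat \<Rightarrow> real) \<Rightarrow> (nat \<Rightarrow> real) \<Rightarrow> (nat \<Rightarrow> real) \<Rightarrow> real" where
  "weighted_power_sum I c d p y = (\<Sum>i\<in>I. c i * (y i / d i) powr p i)"

lemma hill_A_eq_weighted_power_sum: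
  "hill_A Act w hc m y = weighted_power_sum Act w (\<lambda>_. 1) hc y powr m"
  by (simp add: hill_A_def weighted_power_sum_def)

lemma hill_B_eq_weighted_power_sum:
  "hill_B Inh K Kj hc m y = K powr m * (1 + weighted_power_sum Inh (\<lambda>_. 1) Kj hc y) powr m"
  by (simp add: hill_B_def weighted_power_sum_def)

lemma weighted_power_sum_nonneg:
  "(\<And>i. i \<in> I \<Longrightarrow> c i \<ge> 0) \<Longrightarrow> weighted_power_sum I c d p y \<ge> 0"
  unfolding weighted_power_sum_def by (auto intro: sum_nonneg)

lemma weighted_power_sum_partial:
  assumes I: "finite I" and c: "\<forall>i\<in>I. c i > 0" and d: "\<forall>i\<in>I. d i > 0"
    and p: "\<forall>i\<in>I. p i \<ge> 1" and y: "\<forall>i\<in>I. y i \<ge> 0"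
  shows "\<exists>S'. ((\<lambda>t. weighted_power_sum I c d p (y(k := t))) has_real_derivative S')
                 (at (y k) within {0..}) \<and>
              0 \<le> S' \<and> S' \<le> (if k \<in> I then p k * (c k + weighted_power_sum I c d p y) / d k else 0)"
proof -
  define term' where
    "term' i = (if i = k then c k * powr_deriv (p k) (y k / d k) / d k else 0)" for i
  have "((\<lambda>t. weighted_power_sum I c d p (y(k := t))) has_real_derivative (\<Sum>i\<in>I. term' i))
          (at (y k) within {0..})"
    unfolding weighted_power_sum_def
  proof (rule DERIV_sum)
    fix i assume "i \<in> I"
    show "((\<lambda>t. c i * ((y(k := t)) i / d i) powr p i) has_real_derivative term' i)
            (at (y k) within {0..})"
    proof (cases "i = k")
      case True
      have "d k > 0" using \<open>i \<in> I\<close> True d by auto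
      then have "((\<lambda>t. t / d k) has_real_derivative 1 / d k) (at (y k) within {0..})"
        by (auto intro!: derivative_eq_intros)
      then have "((\<lambda>t. (t / d k) powr p k) has_real_derivative
                   powr_deriv (p k) (y k / d k) * (1 / d k)) (at (y k) within {0..})"
        using \<open>i \<in> I\<close> True p d y by (intro DERIV_powr_nonneg_chain) auto
      from DERIV_cmult[OF this, of "c k"] show ?thesis using True by (simp add: term'_def)
    qed (simp add: term'_def)
  qed
  moreover have "(\<Sum>i\<in>I. term' i) = (if k \<in> I then term' k else 0)"
    using I by (simp add: term'_def)
  moreover have "0 \<le> term' k \<and> term' k \<le> p k * (c k + weighted_power_sum I c d p y) / d k"
    if "k \<in> I"
  proof -
    have ck: "c k > 0" and dk: "d k > 0" and pk: "p k \<ge> 1" and yk: "y k / d k \<ge> 0"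
      using that c d p y by auto
    have "c k * powr_deriv (p k) (y k / d k) \<le> p k * (c k + c k * (y k / d k) powr p k)"
      using mult_left_mono[OF powr_deriv_le[OF pk yk], of "c k"] ck by (simp add: algebra_simps)
    also have "\<dots> \<le> p k * (c k + weighted_power_sum I c d p y)"
      unfolding weighted_power_sum_def
      using member_le_sum[OF that, of "\<lambda>i. c i * (y i / d i) powr p i"] I c pk
      by (intro mult_left_mono) (auto simp: less_imp_le)
    finally have "c k * powr_deriv (p k) (y k / d k) \<le> p k * (c k + weighted_power_sum I c d p y)" .
    then show ?thesis
      using ck dk powr_deriv_nonneg[OF pk yk] by (simp add: term'_def divide_right_mono)
  qed
  ultimately show ?thesis by (intro exI[of _ "\<Sum>i\<in>I. term' i"]) auto
qed

lemma hill_B_ge: "m \<ge> 0 \<Longrightarrow> K powr m \<le> hill_B Inh K Kj hc m y"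
  unfolding hill_B_eq_weighted_power_sum
  using ge_one_powr_ge_zero[of "1 + weighted_power_sum Inh (\<lambda>_. 1) Kj hc y" m]
    weighted_power_sum_nonneg[of Inh "\<lambda>_. 1" Kj hc y]
    mult_left_mono[of 1 _ "K powr m"]
  by simp

lemma hill_A_partial:
  assumes "finite Act" and w: "\<forall>i\<in>Act. w i > 0" and hc: "\<forall>i\<in>Act. hc i \<ge> 1" and m: "m \<ge> 1"
    and "\<forall>i\<in>Act. y i \<ge> 0"
  shows "\<exists>A'. has_partial_deriv (hill_A Act w hc m) k A' y \<and> 0 \<le> A' \<and>
           A' \<le> (if k \<in> Act then hc k * m * (w k + (w k + 1) * hill_A Act w hc m y) else 0)"
proof -
  define a where "a t = weighted_power_sum Act w (\<lambda>_. 1) hc (y(k := t))" for t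
  have a_nonneg: "a t \<ge> 0" for t
    using w by (auto simp: a_def intro: weighted_power_sum_nonneg less_imp_le)
  obtain a' where da: "(a has_real_derivative a') (at (y k) within {0..})" and "a' \<ge> 0"
    and a'_le: "k \<in> Act \<Longrightarrow> a' \<le> hc k * (w k + a (y k))" and a'_0: "k \<notin> Act \<Longrightarrow> a' = 0"
    using weighted_power_sum_partial[of Act w "\<lambda>_. 1" hc y k] assms
    by (auto simp: a_def[abs_def] split: if_splits)
  define A' where "A' = powr_deriv m (a (y k)) * a'"
  have "((\<lambda>t. a t powr m) has_real_derivative A') (at (y k) within {0..})"
    unfolding A'_def using m a_nonneg by (intro DERIV_powr_nonneg_chain[OF _ da])
  then have "has_partial_deriv (hill_A Act w hc m) k A' y"
    by (simp add: has_partial_deriv_def hill_A_eq_weighted_power_sum a_def)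
  moreover have "A' \<ge> 0"
    using \<open>a' \<ge> 0\<close> a_nonneg m by (simp add: A'_def powr_deriv_nonneg)
  moreover have "A' \<le> hc k * m * (w k + (w k + 1) * hill_A Act w hc m y)" if "k \<in> Act"
  proof -
    have "hc k \<ge> 1" "w k > 0" using that w hc by auto
    then have "A' \<le> hc k * m * (w k + (w k + 1) * a (y k) powr m)"
      unfolding A'_def using m a_nonneg a'_le[OF that] by (intro powr_deriv_chain_le) auto
    then show ?thesis by (simp add: hill_A_eq_weighted_power_sum a_def)
  qed
  ultimately show ?thesis using a'_0 by (intro exI[of _ A']) (auto simp: A'_def)
qed

lemma hill_B_partial:
  assumes "finite Inh" and Kj: "\<forall>j\<in>Inh. Kj j > 0" and hc: "\<forall>j\<in>Inh. hc j \<ge> 1" and m: "m \<ge> 1"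
    and "\<forall>j\<in>Inh. y j \<ge> 0"
  shows "\<exists>B'. has_partial_deriv (hill_B Inh K Kj hc m) k B' y \<and> 0 \<le> B' \<and>
           B' \<le> (if k \<in> Inh then hc k * m / Kj k * hill_B Inh K Kj hc m y else 0)"
proof -
  define u where "u t = 1 + weighted_power_sum Inh (\<lambda>_. 1) Kj hc (y(k := t))" for t
  have u_pos: "u t \<ge> 1" for t
    using weighted_power_sum_nonneg[of Inh "\<lambda>_. 1"] by (simp add: u_def)
  obtain s' where "((\<lambda>t. weighted_power_sum Inh (\<lambda>_. 1) Kj hc (y(k := t))) has_real_derivative s')
                     (at (y k) within {0..})" and "s' \<ge> 0"
    and s'_le: "k \<in> Inh \<Longrightarrow> s' \<le> hc k / Kj k * u (y k)" and s'_0: "k \<notin> Inh \<Longrightarrow> s' = 0"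
    using weighted_power_sum_partial[of Inh "\<lambda>_. 1" Kj hc y k] assms
    by (auto simp: u_def split: if_splits)
  from DERIV_add[OF DERIV_const this(1), of 1]
  have du: "(u has_real_derivative s') (at (y k) within {0..})" by (simp add: u_def[abs_def])
  define B' where "B' = K powr m * (powr_deriv m (u (y k)) * s')"
  have "((\<lambda>t. K powr m * u t powr m) has_real_derivative B') (at (y k) within {0..})"
    unfolding B'_def using m u_pos
    by (intro DERIV_cmult DERIV_powr_nonneg_chain[OF _ du]) (auto intro: order_trans[OF zero_le_one])
  then have "has_partial_deriv (hill_B Inh K Kj hc m) k B' y"
    by (simp add: has_partial_deriv_def hill_B_eq_weighted_power_sum u_def)
  moreover have "B' \<ge> 0"
    using \<open>s' \<ge> 0\<close> u_pos[of "y k"] m by (simp add: B'_def powr_deriv_nonneg)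
  moreover have "B' \<le> hc k * m / Kj k * hill_B Inh K Kj hc m y" if "k \<in> Inh"
  proof -
    have "hc k \<ge> 1" "Kj k > 0" using that hc Kj by auto
    then have "hc k / Kj k \<ge> 0" by simp
    then have "powr_deriv m (u (y k)) * s' \<le> hc k / Kj k * m * (0 + (0 + 1) * u (y k) powr m)"
      using m u_pos s'_le[OF that] by (intro powr_deriv_chain_le) (auto intro: order_trans[OF zero_le_one])
    from mult_left_mono[OF this, of "K powr m"] show ?thesis
      by (simp add: B'_def hill_B_eq_weighted_power_sum u_def algebra_simps)
  qed
  ultimately show ?thesis using s'_0 by (intro exI[of _ B']) (auto simp: B'_def)
qed

lemma hill_H_partial_bounded:
  assumes fin: "finite Act" "finite Inh"
    and w: "\<forall>i\<in>Act. w i > 0" and K: "K > 0" and Kj: "\<forall>j\<in>Inh. Kj j > 0"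
    and hc: "\<forall>i\<in>Act \<union> Inh. hc i \<ge> 1" and m: "m \<ge> 1"
    and y: "\<forall>i\<in>Act \<union> Inh. y i \<ge> 0"
  shows "\<exists>D. has_partial_deriv (hill_H Act Inh w K Kj hc m) k D y \<and>
           \<bar>D\<bar> \<le> (if k \<in> Act then hc k * m * (w k / K powr m + w k + 1) else 0)
                 + (if k \<in> Inh then hc k * m / Kj k else 0)"
proof -
  define A where "A = (\<lambda>t. hill_A Act w hc m (y(k := t)))"
  define B where "B = (\<lambda>t. hill_B Inh K Kj hc m (y(k := t)))"
  obtain A' where dA: "(A has_real_derivative A') (at (y k) within {0..})" and "A' \<ge> 0"
    and A'_le: "A' \<le> (if k \<in> Act then hc k * m * (w k + (w k + 1) * A (y k)) else 0)"
    using hill_A_partial[where hc=hc and y=y and k=k, OF fin(1) w _ m] hc y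
    unfolding A_def has_partial_deriv_def fun_upd_triv by auto
  obtain B' where dB: "(B has_real_derivative B') (at (y k) within {0..})" and "B' \<ge> 0"
    and B'_le: "B' \<le> (if k \<in> Inh then hc k * m / Kj k * B (y k) else 0)"
    using hill_B_partial[where K=K and hc=hc and y=y and k=k, OF fin(2) Kj _ m] hc y
    unfolding B_def has_partial_deriv_def fun_upd_triv by auto
  have "K powr m \<le> B (y k)" "K powr m > 0" "A (y k) \<ge> 0"
    using hill_B_ge m K by (auto simp: A_def B_def hill_A_def)
  then have "B (y k) > 0" by linarith
  obtain D where "((\<lambda>t. A t / (A t + B t)) has_real_derivative D) (at (y k) within {0..})"
    and D_le: "\<bar>D\<bar> \<le> A' / (A (y k) + B (y k)) + B' / B (y k)"
    using DERIV_ratio_abs_le[OF dA dB \<open>A (y k) \<ge> 0\<close> \<open>B (y k) > 0\<close> \<open>A' \<ge> 0\<close> \<open>B' \<ge> 0\<close>]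
    by blast
  then have "has_partial_deriv (hill_H Act Inh w K Kj hc m) k D y"
    by (simp add: has_partial_deriv_def hill_H_def A_def B_def)
  moreover have "A' / (A (y k) + B (y k)) \<le> (if k \<in> Act then hc k * m * (w k / K powr m + w k + 1) else 0)"
  proof (cases "k \<in> Act")
    case True
    then have "hc k \<ge> 1" "w k > 0" using hc w by auto
    then have "A' / (A (y k) + B (y k)) \<le> hc k * m * (w k / K powr m + w k + 1)"
      using A'_le True m \<open>K powr m \<le> B (y k)\<close> \<open>K powr m > 0\<close> \<open>A (y k) \<ge> 0\<close>
      by (intro linear_growth_div_add_le) auto
    then show ?thesis using True by simp
  qed (use A'_le \<open>A' \<ge> 0\<close> in simp)
  moreover have "B' / B (y k) \<le> (if k \<in> Inh then hc k * m / Kj k else 0)"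
    using B'_le \<open>B' \<ge> 0\<close> \<open>B (y k) > 0\<close> by (auto simp: pos_divide_le_eq)
  ultimately show ?thesis using D_le by (intro exI[of _ D]) auto
qed

theorem proposition1:
  fixes n :: nat and Act Inh :: "nat set" and w Kj hc :: "nat \<Rightarrow> real" and K m :: real
  assumes "n \<ge> 1"
    and "Act \<subseteq> {1..n}" and "Inh \<subseteq> {1..n}"
    and "\<forall>i\<in>Act. w i > 0"
    and "K > 0"
    and "\<forall>j\<in>Inh. Kj j > 0"
    and "\<forall>i\<in>Act \<union> Inh. hc i \<ge> 1"
    and "m \<ge> 1"
  shows "\<exists>C>0. \<forall>k\<in>{1..n}. \<forall>y\<in>nonneg_orthant n.
           \<exists>D. has_partial_deriv (hill_H Act Inh w K Kj hc m) k D y \<and> \<bar>D\<bar> \<le> C"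
proof -
  define bound where "bound k =
      (if k \<in> Act then hc k * m * (w k / K powr m + w k + 1) else 0)
    + (if k \<in> Inh then hc k * m / Kj k else 0)" for k
  have bound_nonneg: "bound k \<ge> 0" for k
  proof -
    have "hc k \<ge> 0" if "k \<in> Act \<union> Inh" using assms(7) that order_trans[OF zero_le_one] by blast
    then show ?thesis
      using assms(4-6,8) unfolding bound_def
      by (auto intro!: add_nonneg_nonneg mult_nonneg_nonneg divide_nonneg_pos)
  qed
  have fin: "finite Act" "finite Inh" using assms(2,3) finite_subset by blast+
  have "\<exists>D. has_partial_deriv (hill_H Act Inh w K Kj hc m) k D y \<and> \<bar>D\<bar> \<le> 1 + (\<Sum>k\<in>{1..n}. bound k)"
    if "k \<in> {1..n}" and "y \<in> nonneg_orthant n" for k y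
  proof -
    have "\<forall>i\<in>Act \<union> Inh. y i \<ge> 0" using that assms(2,3) by (auto simp: nonneg_orthant_def)
    then obtain D where "has_partial_deriv (hill_H Act Inh w K Kj hc m) k D y" "\<bar>D\<bar> \<le> bound k"
      using hill_H_partial_bounded[OF fin assms(4-8)] unfolding bound_def by blast
    moreover have "bound k \<le> (\<Sum>k\<in>{1..n}. bound k)"
      using that bound_nonneg by (intro member_le_sum) auto
    ultimately show ?thesis by (intro exI[of _ D]) auto
  qed
  moreover have "1 + (\<Sum>k\<in>{1..n}. bound k) > 0"
    using bound_nonneg by (simp add: add_pos_nonneg sum_nonneg)
  ultimately show ?thesis by blast
qed

end
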